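(* Let $n\ge3$, $0\le\alpha\le1$ and $m:=\lfloor n^\alpha\rfloor$. Then \[ \mathbf E\bigl(\hat L_n^{\alpha,1}\bigr)=2\,\frac{n-m}{n-1} \] and \[ \mathbf{Var}\bigl(\hat L_n^{\alpha,1}\bigr)=\frac{8(h_{n-1}-h_{m-1})(n+2m-2)}{(n-1)(n-2)}-\frac{4(n-m)(4n+m-5)}{(n-1)^2(n-2)}. \] In particular (case $\alpha=0$), $\mathbf E(L_n)=2$ and $\mathbf{Var}(L_n)=\frac{8nh_n-16n+8}{(n-1)(n-2)}$.
   Context: Kingman's $n$-coalescent ($n\ge 2$) consists of coalescent times $T_1>T_2>\cdots>T_n=0$ such that $\binom{k}{2}(T_{k-1}-T_k)$, $k=2,\dots,n$, are independent exponential random variables with mean $1$, together with an independent sequence of partitions $\pi_1=\{\{1,\dots,n\}\},\pi_2,\dots,\pi_n=\{\{1\},\dots,\{n\}\}$ of $\{1,\dots,n\}$, where $\pi_k$ has $k$ blocks and $\pi_{k-1}$ is obtained from $\pi_k$ by merging two blocks of $\pi_k$ chosen uniformly at random (independently of the past). For a leaf $i$ let $\rho(i):=\max\{k\ge1:\{i\}\notin\pi_k\}$, and $L_n:=\sum_{i=1}^nT_{\rho(i)}$. For $0\le\alpha<\beta\le1$ define $\hat L_n^{\alpha,\beta}:=\sum_{i=1}^n\bigl(T_{\rho(i)}\wedge T_{\lfloor n^\alpha\rfloor}-T_{\rho(i)}\wedge T_{\lfloor n^\beta\rfloor}\bigr)$ (the portion of the external length between levels $\lfloor n^\alpha\rfloor$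 and $\lfloor n^\beta\rfloor$); note $\hat L_n^{0,1}=L_n$. Here $h_j:=1+\frac12+\cdots+\frac1j$ is the $j$-th harmonic number, with $h_0:=0$. *)

theory Defs
  imports "HOL-Probability.Probability"
begin

definition Exp1 :: "real measure" where
  "Exp1 = density lborel (\<lambda>x. ennreal (exponential_density 1 x))"

definition merge_step :: "nat set set \<Rightarrow> nat set set pmf" where
  "merge_step P = map_pmf (\<lambda>D. (P - D) \<union> {\<Union>D}) (pmf_of_set {D. D \<subseteq> P \<and> card D = 2})"

fun chain_from :: "nat \<Rightarrow> nat set set \<Rightarrow> nat set set list pmf" where
  "chain_from 0 P = return_pmf [P]"
| "chain_from (Suc j) P = bind_pmf (merge_step P) (\<lambda>Q. map_pmf (Cons P) (chain_from j Q))"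

definition singletons :: "nat \<Rightarrow> nat set set" where
  "singletons n = {{i} | i. i \<in> {1..n}}"

text \<open>Sample space: (W, Ps) where W k (k = 2..n) are the iid Exp(1) variables
  binom(k,2)(T_{k-1} - T_k), and Ps = [pi_n, pi_{n-1}, ..., pi_1] is the
  partition chain, independent of W.\<close>
definition coalescent :: "nat \<Rightarrow> ((nat \<Rightarrow> real) \<times> nat set set list) measure" where
  "coalescent n = (PiM {2..n} (\<lambda>_. Exp1)) \<Otimes>\<^sub>M measure_pmf (chain_from (n - 1) (singletons n))"

definition coal_T :: "nat \<Rightarrow> (nat \<Rightarrow> real) \<Rightarrow> nat \<Rightarrow> real" where
  "coal_T n W k = (\<Sum>j\<in>{k+1..n}. W j / real (j choose 2))"

definition coal_pi :: "nat \<Rightarrow> nat set set list \<Rightarrow> nat \<Rightarrow> nat set set" where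
  "coal_pi n Ps k = Ps ! (n - k)"

text \<open>rho(i) = max{k >= 1 : {i} not in pi_k}  (k ranges over 1..n, as pi_k is only
  defined there).\<close>
definition coal_rho :: "nat \<Rightarrow> nat set set list \<Rightarrow> nat \<Rightarrow> nat" where
  "coal_rho n Ps i = Max {k \<in> {1..n}. {i} \<notin> coal_pi n Ps k}"

definition ext_length :: "nat \<Rightarrow> (nat \<Rightarrow> real) \<times> nat set set list \<Rightarrow> real" where
  "ext_length n \<omega> = (\<Sum>i\<in>{1..n}. coal_T n (fst \<omega>) (coal_rho n (snd \<omega>) i))"

definition ext_length_part :: "nat \<Rightarrow> real \<Rightarrow> real \<Rightarrow> (nat \<Rightarrow> real) \<times> nat set set list \<Rightarrow> real" where
  "ext_length_part n \<alpha> \<beta> \<omega> =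
    (let T = coal_T n (fst \<omega>); \<rho> = coal_rho n (snd \<omega>);
         a = nat \<lfloor>real n powr \<alpha>\<rfloor>; b = nat \<lfloor>real n powr \<beta>\<rfloor>
     in (\<Sum>i\<in>{1..n}. min (T (\<rho> i)) (T a) - min (T (\<rho> i)) (T b)))"

end

theory Submission
  imports Defs
begin

(* Write S_j for the number of singleton blocks of pi_j and W_j = binom(j,2) (T_(j-1) - T_j)
   for the i.i.d. Exp(1) weights.  Leaf i is external at level j (rho(i) < j) exactly when {i}
   is a block of pi_j, so exchanging the sums over leaves and levels gives, almost surely,
     hat L_n^(alpha,1) = sum_(j=m+1..n) W_j S_j / binom(j,2).
   As the weights are independent of the chain, with E W_j = 1 and E W_j W_l = 1 + [j = l],
   both moments reduce to E S_a and E S_a S_b.  These come from one merge step: a partition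
   with k blocks and s singletons has on average s(k-2)/k singletons after a uniform merge,
   and the mean of s(s-1) is multiplied by (k-2)(k-3)/(k(k-1)).  Iterating along the chain
   (a telescoping product) gives E S_a = a(a-1)/(n-1), E S_a(S_a-1) = a(a-1)^2(a-2)/((n-1)(n-2)),
   and by the Markov property E S_a S_b = E S_a^2 b(b-1)/(a(a-1)) for b <= a.  Summing over
   the levels with two harmonic-sum identities yields the closed forms; alpha = 0 (m = 1) gives
   the statements about L_n. *)

section \<open>Partitions, singletons and merging two blocks\<close>

definition is_partition :: "nat set \<Rightarrow> nat set set \<Rightarrow> bool" where
  "is_partition U P \<longleftrightarrow> finite P \<and> {} \<notin> P \<and> \<Union>P = U \<and>
     (\<forall>A\<in>P. \<forall>B\<in>P. A \<noteq> B \<longrightarrow> A \<inter> B = {})"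

definition singleton_ind :: "nat set \<Rightarrow> real" where
  "singleton_ind A = (if \<exists>i. A = {i} then 1 else 0)"

definition nsing :: "nat set set \<Rightarrow> nat" where
  "nsing P = card {i. {i} \<in> P}"

definition merge_blocks :: "nat set set \<Rightarrow> nat set set \<Rightarrow> nat set set" where
  "merge_blocks P D = (P - D) \<union> {\<Union>D}"

definition block_pairs :: "nat set set \<Rightarrow> nat set set set" where
  "block_pairs P = {D. D \<subseteq> P \<and> card D = 2}"

lemma singleton_ind_idem: "singleton_ind A * singleton_ind A = singleton_ind A"
  by (simp add: singleton_ind_def)

lemma nsing_eq_sum:
  assumes "finite P"
  shows "real (nsing P) = (\<Sum>A\<in>P. singleton_ind A)"
proof -
  have "(\<Sum>A\<in>P. singleton_ind A) = real (card {A\<in>P. \<exists>i. A = {i}})"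
    using assms by (simp add: singleton_ind_def sum.If_cases Int_def conj_commute)
  also have "{A\<in>P. \<exists>i. A = {i}} = (\<lambda>i. {i}) ` {i. {i} \<in> P}" by auto
  also have "card \<dots> = nsing P"
    by (simp add: nsing_def card_image inj_on_def)
  finally show ?thesis ..
qed

lemma merge_pair:
  assumes P: "is_partition U P" and AB: "A \<in> P" "B \<in> P" "A \<noteq> B"
  shows "is_partition U (merge_blocks P {A,B})"
    and "card (merge_blocks P {A,B}) = card P - 1"
    and "real (nsing (merge_blocks P {A,B})) = real (nsing P) - singleton_ind A - singleton_ind B"
    and "{i} \<in> merge_blocks P {A,B} \<Longrightarrow> {i} \<in> P"
proof -
  have fin: "finite P" and ne: "{} \<notin> P" and UP: "\<Union>P = U"
    and disj: "\<And>X Y. X \<in> P \<Longrightarrow> Y \<in> P \<Longrightarrow> X \<noteq> Y \<Longrightarrow> X \<inter> Y = {}"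
    using P by (auto simp: is_partition_def)
  have A_ne: "A \<noteq> {}" and B_ne: "B \<noteq> {}" using ne AB by auto
  have merged_eq: "merge_blocks P {A,B} = insert (A \<union> B) (P - {A,B})"
    by (auto simp: merge_blocks_def)
  have new_block: "A \<union> B \<notin> P - {A,B}"
  proof
    assume "A \<union> B \<in> P - {A,B}"
    then have "A \<inter> (A \<union> B) = {}" using disj[OF AB(1), of "A \<union> B"] by auto
    with A_ne show False by auto
  qed
  have union_not_singleton: "singleton_ind (A \<union> B) = 0"
  proof -
    have "A \<union> B \<noteq> {i}" for i
    proof
      assume "A \<union> B = {i}"
      then have "A = {i}" "B = {i}" using A_ne B_ne by (auto simp: Un_singleton_iff)
      with AB(3) show False by simp
    qed
    then show ?thesis by (auto simp: singleton_ind_def)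
  qed
  show "is_partition U (merge_blocks P {A,B})"
    unfolding is_partition_def merged_eq
  proof (intro conjI ballI impI)
    fix X Y assume "X \<in> insert (A \<union> B) (P - {A,B})" "Y \<in> insert (A \<union> B) (P - {A,B})" "X \<noteq> Y"
    then show "X \<inter> Y = {}"
      using disj AB by (auto; metis Int_iff empty_iff insertCI)+
  qed (use fin ne A_ne UP AB in auto)
  have "card {A,B} = 2" using AB by simp
  moreover have "card {A,B} \<le> card P" using fin AB by (intro card_mono) auto
  ultimately show "card (merge_blocks P {A,B}) = card P - 1"
    unfolding merged_eq using fin AB new_block by (simp add: card_Diff_subset)
  have "real (nsing (merge_blocks P {A,B})) = singleton_ind (A \<union> B) + (\<Sum>X\<in>P - {A,B}. singleton_ind X)"
    unfolding merged_eq using fin new_block by (simp add: nsing_eq_sum)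
  also have "\<dots> = real (nsing P) - singleton_ind A - singleton_ind B"
    using fin AB by (simp add: union_not_singleton sum_diff nsing_eq_sum)
  finally show "real (nsing (merge_blocks P {A,B})) = real (nsing P) - singleton_ind A - singleton_ind B" .
  show "{i} \<in> merge_blocks P {A,B} \<Longrightarrow> {i} \<in> P"
    using union_not_singleton unfolding merged_eq singleton_ind_def by (metis DiffD1 insertE one_neq_zero)
qed

section \<open>One uniform merge step\<close>

abbreviation expect :: "'a pmf \<Rightarrow> ('a \<Rightarrow> real) \<Rightarrow> real" where
  "expect p f \<equiv> measure_pmf.expectation p f"

lemma expect_cong: "(\<And>x. x \<in> set_pmf p \<Longrightarrow> f x = g x) \<Longrightarrow> expect p f = expect p g"
  by (intro integral_cong_AE) (auto simp: AE_measure_pmf_iff)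

text \<open>Ordered pairs of distinct blocks; each unordered pair is counted twice.\<close>
definition ordered_pairs :: "nat set set \<Rightarrow> (nat set \<times> nat set) set" where
  "ordered_pairs P = Sigma P (\<lambda>A. P - {A})"

lemma card_ordered_pairs: "finite P \<Longrightarrow> card (ordered_pairs P) = card P * (card P - 1)"
  by (simp add: ordered_pairs_def card_SigmaI card_Diff_subset)

lemma block_pairs_elem:
  assumes "D \<in> block_pairs P"
  obtains A B where "D = {A,B}" "A \<in> P" "B \<in> P" "A \<noteq> B"
proof -
  obtain A B where D: "D = {A,B}" "A \<noteq> B" using assms by (auto simp: block_pairs_def card_2_iff)
  moreover have "A \<in> P" "B \<in> P" using assms D by (auto simp: block_pairs_def)
  ultimately show ?thesis using that by blast
qed

lemma sum_ordered_pairs_iterated: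
  "finite P \<Longrightarrow> (\<Sum>x\<in>ordered_pairs P. g x) = (\<Sum>A\<in>P. \<Sum>B\<in>P - {A}. g (A, B))"
  using sum.Sigma[of P "\<lambda>A. P - {A}" "\<lambda>A B. g (A, B)"] by (simp add: ordered_pairs_def)

lemma sum_ordered_pairs_eq_block_pairs:
  fixes h :: "nat set set \<Rightarrow> real"
  assumes fin: "finite P"
  shows "(\<Sum>x\<in>ordered_pairs P. h {fst x, snd x}) = 2 * (\<Sum>D\<in>block_pairs P. h D)"
proof -
  let ?pair = "\<lambda>x::nat set \<times> nat set. {fst x, snd x}"
  have image: "?pair ` ordered_pairs P = block_pairs P"
  proof
    show "?pair ` ordered_pairs P \<subseteq> block_pairs P"
      using card_2_iff by (fastforce simp: ordered_pairs_def block_pairs_def)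
    show "block_pairs P \<subseteq> ?pair ` ordered_pairs P"
    proof
      fix D assume "D \<in> block_pairs P"
      then obtain A B where "D = {A,B}" "A \<in> P" "B \<in> P" "A \<noteq> B"
        by (rule block_pairs_elem)
      then have "(A,B) \<in> ordered_pairs P" "D = ?pair (A,B)" by (auto simp: ordered_pairs_def)
      then show "D \<in> ?pair ` ordered_pairs P" by blast
    qed
  qed
  have fibre: "card {x \<in> ordered_pairs P. ?pair x = D} = 2" if D: "D \<in> block_pairs P" for D
  proof -
    obtain A B where D: "D = {A,B}" "A \<in> P" "B \<in> P" "A \<noteq> B"
      using D by (rule block_pairs_elem)
    then have "{x \<in> ordered_pairs P. ?pair x = D} = {(A,B),(B,A)}"
      by (auto simp: ordered_pairs_def doubleton_eq_iff)
    then show ?thesis using D by simp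
  qed
  have "(\<Sum>x\<in>ordered_pairs P. h (?pair x))
      = (\<Sum>D\<in>?pair ` ordered_pairs P. \<Sum>x\<in>{x \<in> ordered_pairs P. ?pair x = D}. h (?pair x))"
    using fin by (intro sum.image_gen) (simp add: ordered_pairs_def)
  also have "\<dots> = (\<Sum>D\<in>block_pairs P. 2 * h D)"
    unfolding image by (rule sum.cong) (auto simp: fibre)
  finally show ?thesis by (simp add: sum_distrib_left)
qed

lemma sum_ordered_pairs_fst:
  fixes h :: "nat set \<Rightarrow> real"
  assumes "finite P"
  shows "(\<Sum>x\<in>ordered_pairs P. h (fst x)) = (real (card P) - 1) * (\<Sum>A\<in>P. h A)"
proof (cases "P = {}")
  case False
  then have "1 \<le> card P" using assms by (simp add: Suc_leI card_gt_0_iff)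
  then show ?thesis using assms
    by (simp add: sum_ordered_pairs_iterated sum_distrib_right of_nat_diff mult.commute)
qed (simp add: ordered_pairs_def)

lemma sum_ordered_pairs_snd:
  fixes h :: "nat set \<Rightarrow> real"
  assumes "finite P"
  shows "(\<Sum>x\<in>ordered_pairs P. h (snd x)) = (real (card P) - 1) * (\<Sum>A\<in>P. h A)"
proof -
  have "(\<Sum>x\<in>ordered_pairs P. h (snd x)) = (\<Sum>x\<in>ordered_pairs P. h (fst x))"
    by (rule sum.reindex_bij_witness[where i = prod.swap and j = prod.swap])
       (auto simp: ordered_pairs_def)
  with sum_ordered_pairs_fst[OF assms] show ?thesis by simp
qed

lemma sum_ordered_pairs_product:
  fixes h :: "nat set \<Rightarrow> real"
  assumes "finite P"
  shows "(\<Sum>x\<in>ordered_pairs P. h (fst x) * h (snd x)) = (\<Sum>A\<in>P. h A)\<^sup>2 - (\<Sum>A\<in>P. (h A)\<^sup>2)"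
proof -
  have "(\<Sum>x\<in>ordered_pairs P. h (fst x) * h (snd x)) = (\<Sum>A\<in>P. h A * ((\<Sum>B\<in>P. h B) - h A))"
    using assms by (simp add: sum_ordered_pairs_iterated sum_distrib_left[symmetric] sum_diff1)
  also have "\<dots> = (\<Sum>A\<in>P. h A)\<^sup>2 - (\<Sum>A\<in>P. (h A)\<^sup>2)"
    by (simp add: algebra_simps sum_subtractf sum_distrib_right[symmetric] power2_eq_square)
  finally show ?thesis .
qed

lemma merge_step_eq: "merge_step P = map_pmf (merge_blocks P) (pmf_of_set (block_pairs P))"
  unfolding merge_step_def block_pairs_def merge_blocks_def[abs_def] ..

lemma block_pairs_finite_nonempty:
  assumes "finite P" "card P \<ge> 2"
  shows "finite (block_pairs P)" "block_pairs P \<noteq> {}" "card (block_pairs P) = card P choose 2"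
proof -
  show card: "card (block_pairs P) = card P choose 2"
    unfolding block_pairs_def using assms(1) by (rule n_subsets)
  show "finite (block_pairs P)"
    by (rule finite_subset[of _ "Pow P"]) (use assms in \<open>auto simp: block_pairs_def\<close>)
  then show "block_pairs P \<noteq> {}"
    using card assms(2) by (metis card.empty zero_less_binomial_iff not_less zero_less_iff_neq_zero)
qed

lemma real_choose_two: "real (k choose 2) = real k * (real k - 1) / 2"
proof -
  have "(2::nat) dvd k * (k - 1)" by auto
  then show ?thesis by (cases k) (simp_all add: choose_two real_of_nat_div algebra_simps)
qed

lemma set_pmf_merge_step:
  assumes "finite P" "card P \<ge> 2"
  shows "set_pmf (merge_step P) = merge_blocks P ` block_pairs P"
  using block_pairs_finite_nonempty[OF assms] by (simp add: merge_step_eq)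

lemma expect_merge_step:
  assumes fin: "finite P" and two: "card P \<ge> 2"
  shows "expect (merge_step P) F
    = (\<Sum>x\<in>ordered_pairs P. F (merge_blocks P {fst x, snd x})) / (real (card P) * (real (card P) - 1))"
proof -
  note pairs = block_pairs_finite_nonempty[OF assms]
  have "expect (merge_step P) F = (\<Sum>D\<in>block_pairs P. F (merge_blocks P D)) / (real (card P) * (real (card P) - 1) / 2)"
    using pairs by (simp add: merge_step_eq integral_pmf_of_set real_choose_two)
  then show ?thesis
    using sum_ordered_pairs_eq_block_pairs[OF fin, of "\<lambda>D. F (merge_blocks P D)"] by simp
qed

lemma merge_step_support:
  assumes P: "is_partition U P" and two: "card P \<ge> 2" and Q: "Q \<in> set_pmf (merge_step P)"
  shows "is_partition U Q" "card Q = card P - 1" "\<And>i. {i} \<in> Q \<Longrightarrow> {i} \<in> P"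
proof -
  have fin: "finite P" using P by (simp add: is_partition_def)
  obtain D where "D \<in> block_pairs P" "Q = merge_blocks P D"
    using Q by (auto simp: set_pmf_merge_step[OF fin two])
  then obtain A B where "Q = merge_blocks P {A,B}" "A \<in> P" "B \<in> P" "A \<noteq> B"
    by (metis block_pairs_elem)
  then show "is_partition U Q" "card Q = card P - 1" "\<And>i. {i} \<in> Q \<Longrightarrow> {i} \<in> P"
    using merge_pair[OF P] by auto
qed

text \<open>Mean number of singletons after one merge: each block is involved with
  probability 2/k, so s singletons become s (k-2)/k on average.\<close>
lemma merge_step_mean_nsing:
  assumes P: "is_partition U P" and two: "card P \<ge> 2"
  shows "expect (merge_step P) (\<lambda>Q. real (nsing Q)) = real (nsing P) * (real (card P) - 2) / real (card P)"
proof -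
  have fin: "finite P" using P by (simp add: is_partition_def)
  let ?s = "real (nsing P)" and ?k = "real (card P)"
  have "(\<Sum>x\<in>ordered_pairs P. real (nsing (merge_blocks P {fst x, snd x})))
      = (\<Sum>x\<in>ordered_pairs P. ?s - singleton_ind (fst x) - singleton_ind (snd x))"
    by (intro sum.cong refl) (auto simp: ordered_pairs_def intro!: merge_pair[OF P])
  also have "\<dots> = ?k * (?k - 1) * ?s - 2 * (?k - 1) * ?s"
    using fin two by (simp add: sum_subtractf sum_ordered_pairs_fst sum_ordered_pairs_snd
        nsing_eq_sum[symmetric] card_ordered_pairs of_nat_diff)
  finally have sum_eq: "(\<Sum>x\<in>ordered_pairs P. real (nsing (merge_blocks P {fst x, snd x})))
      = ?k * (?k - 1) * ?s - 2 * (?k - 1) * ?s" .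
  have "?k \<noteq> 0" "?k - 1 \<noteq> 0" using two by auto
  then show ?thesis by (simp add: expect_merge_step[OF fin two] sum_eq field_simps)
qed

lemma merge_step_mean_nsing_pairs:
  assumes P: "is_partition U P" and two: "card P \<ge> 2"
  shows "expect (merge_step P) (\<lambda>Q. real (nsing Q) * (real (nsing Q) - 1))
    = real (nsing P) * (real (nsing P) - 1) * (real (card P) - 2) * (real (card P) - 3)
      / (real (card P) * (real (card P) - 1))"
proof -
  have fin: "finite P" using P by (simp add: is_partition_def)
  let ?s = "real (nsing P)" and ?k = "real (card P)"
  let ?a = "\<lambda>x. singleton_ind (fst x)" and ?b = "\<lambda>x. singleton_ind (snd x)"
  have expand: "(t - a - b) * (t - a - b - 1) = t * (t - 1) - (2 * t - 2) * a - (2 * t - 2) * b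
      + 2 * (a * b) + (a * a - a) + (b * b - b)" for t a b :: real
    by algebra
  have "(\<Sum>x\<in>ordered_pairs P. real (nsing (merge_blocks P {fst x, snd x})) * (real (nsing (merge_blocks P {fst x, snd x})) - 1))
      = (\<Sum>x\<in>ordered_pairs P. ?s * (?s - 1) - (2 * ?s - 2) * ?a x - (2 * ?s - 2) * ?b x + 2 * (?a x * ?b x))"
  proof (intro sum.cong refl)
    fix x assume "x \<in> ordered_pairs P"
    then have "real (nsing (merge_blocks P {fst x, snd x})) = ?s - ?a x - ?b x"
      by (auto simp: ordered_pairs_def intro!: merge_pair(3)[OF P])
    then show "real (nsing (merge_blocks P {fst x, snd x})) * (real (nsing (merge_blocks P {fst x, snd x})) - 1)
      = ?s * (?s - 1) - (2 * ?s - 2) * ?a x - (2 * ?s - 2) * ?b x + 2 * (?a x * ?b x)"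
      by (simp only: expand singleton_ind_idem)
  qed
  also have "\<dots> = ?k * (?k - 1) * (?s * (?s - 1)) - 4 * (?s - 1) * ((?k - 1) * ?s) + 2 * (?s\<^sup>2 - ?s)"
  proof -
    have "(\<Sum>A\<in>P. (singleton_ind A)\<^sup>2) = ?s"
      unfolding power2_eq_square singleton_ind_idem nsing_eq_sum[OF fin] ..
    then show ?thesis
      using fin two by (simp add: sum.distrib sum_subtractf sum_distrib_left[symmetric]
          sum_ordered_pairs_fst sum_ordered_pairs_snd sum_ordered_pairs_product nsing_eq_sum[symmetric]
          card_ordered_pairs of_nat_diff algebra_simps)
  qed
  finally show ?thesis
    using two by (simp add: expect_merge_step[OF fin two] field_simps power2_eq_square)
qed

section \<open>The partition chain\<close>

lemma greaterThanAtMost_Suc_insert: "a \<le> k \<Longrightarrow> {a<..Suc k} = insert (Suc k) {a<..k}"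
  by auto

lemma expect_bind_pmf_finite:
  fixes f :: "'b \<Rightarrow> real"
  assumes "finite (set_pmf M)" "\<And>x. x \<in> set_pmf M \<Longrightarrow> finite (set_pmf (N x))"
  shows "expect (bind_pmf M N) f = expect M (\<lambda>x. expect (N x) f)"
  using assms by (simp add: pmf_expectation_bind[of "set_pmf M"] integral_measure_pmf[of "set_pmf M"]
      mult.commute)

lemma chain_head: "Ps \<in> set_pmf (chain_from j P) \<Longrightarrow> Ps ! 0 = P"
  by (cases j) auto

lemma expect_chain_head: "expect (chain_from j P) (\<lambda>Ps. h (Ps ! 0)) = h P"
  by (simp add: expect_cong[of _ _ "\<lambda>_. h P"] chain_head)

lemma chain_support:
  "is_partition U P \<Longrightarrow> card P = Suc j \<Longrightarrow> Ps \<in> set_pmf (chain_from j P) \<Longrightarrow>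
   length Ps = Suc j \<and> (\<forall>q\<le>j. is_partition U (Ps ! q) \<and> card (Ps ! q) = Suc j - q)
   \<and> (\<forall>q<j. \<forall>i. {i} \<in> Ps ! Suc q \<longrightarrow> {i} \<in> Ps ! q)"
proof (induction j arbitrary: P Ps)
  case (Suc j)
  from Suc.prems(3) obtain Q Ps' where Q: "Q \<in> set_pmf (merge_step P)" and Ps: "Ps = P # Ps'"
    and Ps': "Ps' \<in> set_pmf (chain_from j Q)"
    by auto
  have two: "card P \<ge> 2" using Suc.prems(2) by simp
  note Q_props = merge_step_support[OF Suc.prems(1) two Q]
  have "card Q = Suc j" using Q_props(2) Suc.prems(2) by simp
  note IH = Suc.IH[OF Q_props(1) this Ps']
  have head: "Ps' ! 0 = Q" by (rule chain_head[OF Ps'])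
  show ?case
  proof (intro conjI allI impI)
    show "length Ps = Suc (Suc j)" using IH Ps by simp
  next
    fix q assume "q \<le> Suc j"
    then show "is_partition U (Ps ! q)" "card (Ps ! q) = Suc (Suc j) - q"
      using IH Ps Suc.prems by (cases q; auto)+
  next
    fix q i assume "q < Suc j" "{i} \<in> Ps ! Suc q"
    then show "{i} \<in> Ps ! q"
      using IH Ps Q_props(3) Suc.prems(2) head by (cases q) auto
  qed
qed simp

lemma chain_finite:
  "is_partition U P \<Longrightarrow> card P = Suc j \<Longrightarrow> finite (set_pmf (chain_from j P))"
proof (induction j arbitrary: P)
  case (Suc j)
  have fin: "finite P" using Suc.prems by (simp add: is_partition_def)
  have "finite (set_pmf (chain_from j Q))" if "Q \<in> set_pmf (merge_step P)" for Q
    using Suc.IH merge_step_support[OF Suc.prems(1) _ that] Suc.prems(2) by simp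
  moreover have "finite (set_pmf (merge_step P))"
    using Suc.prems(2) block_pairs_finite_nonempty[OF fin] by (simp add: set_pmf_merge_step[OF fin])
  ultimately show ?case by simp
qed simp

lemma expect_chain_step:
  assumes P: "is_partition U P" and card: "card P = Suc (Suc j)"
  shows "expect (chain_from (Suc j) P) F
    = expect (merge_step P) (\<lambda>Q. expect (chain_from j Q) (\<lambda>Ps. F (P # Ps)))"
proof -
  have fin: "finite P" using P by (simp add: is_partition_def)
  have "finite (set_pmf (merge_step P))"
    using card block_pairs_finite_nonempty[OF fin] by (simp add: set_pmf_merge_step[OF fin])
  moreover have "finite (set_pmf (map_pmf (Cons P) (chain_from j Q)))"
    if "Q \<in> set_pmf (merge_step P)" for Q
    using chain_finite merge_step_support[OF P _ that] card by simp
  ultimately show ?thesis by (simp add: expect_bind_pmf_finite)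
qed

lemma chain_expect_multiplicative:
  fixes \<phi> :: "nat set set \<Rightarrow> real"
  assumes step: "\<And>Q. is_partition U Q \<Longrightarrow> card Q \<ge> 2 \<Longrightarrow> expect (merge_step Q) \<phi> = \<phi> Q * c (card Q)"
  shows "is_partition U P \<Longrightarrow> card P = Suc j \<Longrightarrow> r \<le> j \<Longrightarrow>
    expect (chain_from j P) (\<lambda>Ps. \<phi> (Ps ! r)) = \<phi> P * (\<Prod>i\<in>{Suc j - r<..Suc j}. c i)"
proof (induction j arbitrary: P r)
  case 0
  then show ?case using expect_chain_head[of 0 P \<phi>] by simp
next
  case (Suc j)
  show ?case
  proof (cases r)
    case 0
    then show ?thesis using expect_chain_head[of "Suc j" P \<phi>] by simp
  next
    case (Suc r')
    let ?prod = "\<Prod>i\<in>{Suc j - r'<..Suc j}. c i"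
    have "expect (chain_from (Suc j) P) (\<lambda>Ps. \<phi> (Ps ! r))
        = expect (merge_step P) (\<lambda>Q. expect (chain_from j Q) (\<lambda>Ps. \<phi> (Ps ! r')))"
      using expect_chain_step[OF Suc.prems(1,2)] Suc by simp
    also have "\<dots> = expect (merge_step P) (\<lambda>Q. \<phi> Q * ?prod)"
      using Suc.IH merge_step_support[OF Suc.prems(1)] Suc.prems Suc by (intro expect_cong) simp
    also have "\<dots> = \<phi> P * (c (Suc (Suc j)) * ?prod)"
      using step[OF Suc.prems(1)] Suc.prems(2) by simp
    also have "\<dots> = \<phi> P * (\<Prod>i\<in>{Suc (Suc j) - r<..Suc (Suc j)}. c i)"
      using Suc.prems(3) Suc by (simp add: greaterThanAtMost_Suc_insert)
    finally show ?thesis .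
  qed
qed

lemma chain_expect_markov:
  fixes \<phi> G :: "nat set set \<Rightarrow> real"
  assumes step: "\<And>Q. is_partition U Q \<Longrightarrow> card Q \<ge> 2 \<Longrightarrow> expect (merge_step Q) \<phi> = \<phi> Q * c (card Q)"
  shows "is_partition U P \<Longrightarrow> card P = Suc j \<Longrightarrow> q \<le> r \<Longrightarrow> r \<le> j \<Longrightarrow>
    expect (chain_from j P) (\<lambda>Ps. G (Ps ! q) * \<phi> (Ps ! r))
      = expect (chain_from j P) (\<lambda>Ps. G (Ps ! q) * \<phi> (Ps ! q)) * (\<Prod>i\<in>{Suc j - r<..Suc j - q}. c i)"
proof (induction j arbitrary: P q r)
  case 0
  then show ?case by simp
next
  case (Suc j)
  show ?case
  proof (cases q)
    case 0
    have "expect (chain_from (Suc j) P) (\<lambda>Ps. G (Ps ! q) * \<phi> (Ps ! r))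
        = expect (chain_from (Suc j) P) (\<lambda>Ps. G P * \<phi> (Ps ! r))"
    proof (rule expect_cong)
      fix Ps assume "Ps \<in> set_pmf (chain_from (Suc j) P)"
      then show "G (Ps ! q) * \<phi> (Ps ! r) = G P * \<phi> (Ps ! r)" using chain_head 0 by metis
    qed
    then have "expect (chain_from (Suc j) P) (\<lambda>Ps. G (Ps ! q) * \<phi> (Ps ! r))
        = G P * expect (chain_from (Suc j) P) (\<lambda>Ps. \<phi> (Ps ! r))"
      by (simp only: integral_mult_right_zero)
    then show ?thesis
      using chain_expect_multiplicative[OF step Suc.prems(1,2,4)] 0
        expect_chain_head[of "Suc j" P "\<lambda>P. G P * \<phi> P"] by simp
  next
    case (Suc q')
    then obtain r' where r: "r = Suc r'" using Suc.prems(3) by (cases r) auto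
    let ?prod = "\<Prod>i\<in>{Suc j - r'<..Suc j - q'}. c i"
    have "expect (chain_from (Suc j) P) (\<lambda>Ps. G (Ps ! q) * \<phi> (Ps ! r))
        = expect (merge_step P) (\<lambda>Q. expect (chain_from j Q) (\<lambda>Ps. G (Ps ! q') * \<phi> (Ps ! r')))"
      using expect_chain_step[OF Suc.prems(1,2)] Suc r by simp
    also have "\<dots> = expect (merge_step P) (\<lambda>Q. expect (chain_from j Q) (\<lambda>Ps. G (Ps ! q') * \<phi> (Ps ! q')) * ?prod)"
    proof (rule expect_cong)
      fix Q assume Q: "Q \<in> set_pmf (merge_step P)"
      have "card P \<ge> 2" using Suc.prems(2) by simp
      note Q_props = merge_step_support[OF Suc.prems(1) this Q]
      show "expect (chain_from j Q) (\<lambda>Ps. G (Ps ! q') * \<phi> (Ps ! r'))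
          = expect (chain_from j Q) (\<lambda>Ps. G (Ps ! q') * \<phi> (Ps ! q')) * ?prod"
        by (rule Suc.IH[OF Q_props(1)]) (use Q_props(2) Suc.prems Suc r in auto)
    qed
    also have "\<dots> = expect (chain_from (Suc j) P) (\<lambda>Ps. G (Ps ! q) * \<phi> (Ps ! q)) * ?prod"
      using expect_chain_step[OF Suc.prems(1,2)] Suc by simp
    finally show ?thesis using Suc r by simp
  qed
qed

lemma telescope_nsing:
  "a \<le> k \<Longrightarrow> real k * (real k - 1) * (\<Prod>i\<in>{a<..k}. (real i - 2) / real i) = real a * (real a - 1)"
proof (induction rule: dec_induct)
  case (step m)
  let ?f = "\<lambda>i::nat. (real i - 2) / real i"
  have "(\<Prod>i\<in>{a<..Suc m}. ?f i) = ?f (Suc m) * (\<Prod>i\<in>{a<..m}. ?f i)"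
    using step(1) by (simp add: greaterThanAtMost_Suc_insert)
  moreover have "real (Suc m) * (real (Suc m) - 1) * (?f (Suc m) * p) = real m * (real m - 1) * p" for p
    by (simp add: divide_simps)
  ultimately show ?case using step(3) by simp
qed simp

lemma telescope_nsing_pairs:
  "a \<le> k \<Longrightarrow> real k * (real k - 1)\<^sup>2 * (real k - 2)
      * (\<Prod>i\<in>{a<..k}. (real i - 2) * (real i - 3) / (real i * (real i - 1)))
    = real a * (real a - 1)\<^sup>2 * (real a - 2)"
proof (induction rule: dec_induct)
  case (step m)
  let ?f = "\<lambda>i::nat. (real i - 2) * (real i - 3) / (real i * (real i - 1))"
  have "(\<Prod>i\<in>{a<..Suc m}. ?f i) = ?f (Suc m) * (\<Prod>i\<in>{a<..m}. ?f i)"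
    using step(1) by (simp add: greaterThanAtMost_Suc_insert)
  moreover have "real (Suc m) * (real (Suc m) - 1)\<^sup>2 * (real (Suc m) - 2) * (?f (Suc m) * p)
      = real m * (real m - 1)\<^sup>2 * (real m - 2) * p" for p
  proof (cases "m = 0")
    case False
    then have "real m + 1 \<noteq> 0" "real m \<noteq> 0" by auto
    then show ?thesis by (simp add: divide_simps power2_eq_square)
  qed simp
  ultimately show ?case using step(3) by simp
qed simp

section \<open>Singleton counts of the n-coalescent\<close>

lemma singletons_partition:
  shows "is_partition {1..n} (singletons n)" "card (singletons n) = n" "nsing (singletons n) = n"
proof -
  have s: "singletons n = (\<lambda>i. {i}) ` {1..n}" by (auto simp: singletons_def)
  show "is_partition {1..n} (singletons n)" unfolding is_partition_def s by auto
  show "card (singletons n) = n" unfolding s by (simp add: card_image inj_on_def)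
  have "{i. {i} \<in> singletons n} = {1..n}" unfolding s by auto
  then show "nsing (singletons n) = n" by (simp add: nsing_def)
qed

text \<open>The partition chain pi_n, pi_(n-1), ..., pi_1 of the n-coalescent, so that
  pi_a = Ps ! (n - a).\<close>
definition leaf_chain :: "nat \<Rightarrow> nat set set list pmf" where
  "leaf_chain n = chain_from (n - 1) (singletons n)"

lemma leaf_chain_support:
  assumes n: "n \<ge> 1" and Ps: "Ps \<in> set_pmf (leaf_chain n)"
  shows "\<And>q. q \<le> n - 1 \<Longrightarrow> is_partition {1..n} (Ps ! q) \<and> card (Ps ! q) = n - q"
    and "\<And>q i. q < n - 1 \<Longrightarrow> {i} \<in> Ps ! Suc q \<Longrightarrow> {i} \<in> Ps ! q"
  using chain_support[OF singletons_partition(1), of n "n - 1" Ps] Ps n singletons_partition(2)[of n]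
  by (auto simp: leaf_chain_def)

lemma leaf_chain_finite: "n \<ge> 1 \<Longrightarrow> finite (set_pmf (leaf_chain n))"
  using chain_finite[OF singletons_partition(1), of n "n - 1"] singletons_partition(2)[of n]
  by (simp add: leaf_chain_def)

text \<open>The coefficient of W_j in the external length: S_j / binom(j,2), where S_j is the number
  of singleton blocks of pi_j.\<close>
definition ext_coeff :: "nat \<Rightarrow> nat set set list \<Rightarrow> nat \<Rightarrow> real" where
  "ext_coeff n Ps j = real (nsing (Ps ! (n - j))) / real (j choose 2)"

text \<open>Closed form of E(ext_coeff a * ext_coeff b) for b \<le> a.\<close>
definition coeff_moment :: "nat \<Rightarrow> nat \<Rightarrow> real" where
  "coeff_moment n a = 4 * (real a - 2) / (real a * (real n - 1) * (real n - 2))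
     + 4 / (real a * (real a - 1) * (real n - 1))"

context
  fixes n :: nat
  assumes n3: "n \<ge> 3"
begin

private lemma leaf_chain_start:
  "is_partition {1..n} (singletons n)" "card (singletons n) = Suc (n - 1)"
  using n3 singletons_partition[of n] by simp_all

lemma leaf_mean_nsing:
  assumes a: "1 \<le> a" "a \<le> n"
  shows "expect (leaf_chain n) (\<lambda>Ps. real (nsing (Ps ! (n - a)))) = real a * (real a - 1) / (real n - 1)"
proof -
  let ?c = "\<lambda>k::nat. (real k - 2) / real k"
  have "expect (leaf_chain n) (\<lambda>Ps. real (nsing (Ps ! (n - a)))) = real n * (\<Prod>i\<in>{a<..n}. ?c i)"
    using chain_expect_multiplicative[of "{1..n}" "\<lambda>Q. real (nsing Q)" ?c, OF _ leaf_chain_start, of "n - a"]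
      merge_step_mean_nsing a n3 singletons_partition(3)[of n]
    by (simp add: leaf_chain_def)
  also have "\<dots> = real a * (real a - 1) / (real n - 1)"
    using telescope_nsing[OF a(2)] n3 by (simp add: field_simps)
  finally show ?thesis .
qed

lemma leaf_mean_nsing_pairs:
  assumes a: "1 \<le> a" "a \<le> n"
  shows "expect (leaf_chain n) (\<lambda>Ps. real (nsing (Ps ! (n - a))) * (real (nsing (Ps ! (n - a))) - 1))
    = real a * (real a - 1)\<^sup>2 * (real a - 2) / ((real n - 1) * (real n - 2))"
proof -
  let ?c = "\<lambda>k::nat. (real k - 2) * (real k - 3) / (real k * (real k - 1))"
  have "expect (leaf_chain n) (\<lambda>Ps. real (nsing (Ps ! (n - a))) * (real (nsing (Ps ! (n - a))) - 1))
      = real n * (real n - 1) * (\<Prod>i\<in>{a<..n}. ?c i)"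
    using chain_expect_multiplicative[of "{1..n}" "\<lambda>Q. real (nsing Q) * (real (nsing Q) - 1)" ?c,
        OF _ leaf_chain_start, of "n - a"]
      merge_step_mean_nsing_pairs a n3 singletons_partition(3)[of n]
    by (simp add: leaf_chain_def)
  also have "\<dots> = real a * (real a - 1)\<^sup>2 * (real a - 2) / ((real n - 1) * (real n - 2))"
  proof -
    define p where "p = (\<Prod>i\<in>{a<..n}. ?c i)"
    have "real n * (real n - 1)\<^sup>2 * (real n - 2) * p = real a * (real a - 1)\<^sup>2 * (real a - 2)"
      unfolding p_def by (rule telescope_nsing_pairs[OF a(2)])
    moreover have "(real n - 1) * (real n - 2) \<noteq> 0" using n3 by simp
    ultimately show ?thesis
      unfolding p_def[symmetric] by (simp add: eq_divide_eq power2_eq_square algebra_simps)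
  qed
  finally show ?thesis .
qed

lemma leaf_mean_nsing_sq:
  assumes a: "1 \<le> a" "a \<le> n"
  shows "expect (leaf_chain n) (\<lambda>Ps. real (nsing (Ps ! (n - a))) * real (nsing (Ps ! (n - a))))
    = real a * (real a - 1)\<^sup>2 * (real a - 2) / ((real n - 1) * (real n - 2)) + real a * (real a - 1) / (real n - 1)"
proof -
  have fin: "finite (set_pmf (leaf_chain n))" using leaf_chain_finite n3 by simp
  let ?S = "\<lambda>Ps. real (nsing (Ps ! (n - a)))"
  have "expect (leaf_chain n) (\<lambda>Ps. ?S Ps * ?S Ps) = expect (leaf_chain n) (\<lambda>Ps. ?S Ps * (?S Ps - 1) + ?S Ps)"
    by (simp add: algebra_simps)
  also have "\<dots> = expect (leaf_chain n) (\<lambda>Ps. ?S Ps * (?S Ps - 1)) + expect (leaf_chain n) ?S"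
    by (rule Bochner_Integration.integral_add) (simp_all add: integrable_measure_pmf_finite[OF fin])
  finally show ?thesis using leaf_mean_nsing_pairs[OF a] leaf_mean_nsing[OF a] by simp
qed

lemma leaf_mean_nsing_mixed:
  assumes b: "1 \<le> b" "b \<le> a" and a: "a \<le> n"
  shows "real a * (real a - 1) * expect (leaf_chain n) (\<lambda>Ps. real (nsing (Ps ! (n - a))) * real (nsing (Ps ! (n - b))))
    = real b * (real b - 1) * expect (leaf_chain n) (\<lambda>Ps. real (nsing (Ps ! (n - a))) * real (nsing (Ps ! (n - a))))"
proof -
  let ?c = "\<lambda>k::nat. (real k - 2) / real k"
  define p where "p = (\<Prod>i\<in>{b<..a}. ?c i)"
  define Eab where "Eab = expect (leaf_chain n) (\<lambda>Ps. real (nsing (Ps ! (n - a))) * real (nsing (Ps ! (n - b))))"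
  define Eaa where "Eaa = expect (leaf_chain n) (\<lambda>Ps. real (nsing (Ps ! (n - a))) * real (nsing (Ps ! (n - a))))"
  have "Eab = Eaa * p"
    unfolding Eab_def Eaa_def p_def
    using chain_expect_markov[of "{1..n}" "\<lambda>Q. real (nsing Q)" ?c, OF _ leaf_chain_start,
        of "n - a" "n - b" "\<lambda>Q. real (nsing Q)"]
      merge_step_mean_nsing a b n3
    by (simp add: leaf_chain_def)
  then have "real a * (real a - 1) * Eab = (real a * (real a - 1) * p) * Eaa"
    by (simp only: ac_simps)
  also have "real a * (real a - 1) * p = real b * (real b - 1)"
    unfolding p_def by (rule telescope_nsing[OF b(2)])
  finally show ?thesis unfolding Eab_def Eaa_def .
qed

lemma mean_ext_coeff:
  assumes a: "a \<in> {2..n}"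
  shows "expect (leaf_chain n) (\<lambda>Ps. ext_coeff n Ps a) = 2 / (real n - 1)"
proof -
  have "real a \<noteq> 0" "real a - 1 \<noteq> 0" using a by auto
  then show ?thesis using leaf_mean_nsing[of a] a by (simp add: ext_coeff_def real_choose_two)
qed

lemma mean_ext_coeff_product:
  assumes a: "a \<in> {2..n}" and b: "b \<in> {2..n}"
  shows "expect (leaf_chain n) (\<lambda>Ps. ext_coeff n Ps a * ext_coeff n Ps b) = coeff_moment n (max a b)"
proof -
  have ordered: "expect (leaf_chain n) (\<lambda>Ps. ext_coeff n Ps a * ext_coeff n Ps b) = coeff_moment n a"
    if a: "a \<in> {2..n}" and b: "b \<in> {2..n}" and ba: "b \<le> a" for a b
  proof -
    let ?S = "\<lambda>Ps c. real (nsing (Ps ! (n - c)))"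
    have nz: "real a \<noteq> 0" "real a - 1 \<noteq> 0" "real b \<noteq> 0" "real b - 1 \<noteq> 0" "real n - 1 \<noteq> 0" "real n - 2 \<noteq> 0"
      using a b n3 by auto
    define Eab where "Eab = expect (leaf_chain n) (\<lambda>Ps. ?S Ps a * ?S Ps b)"
    define Eaa where "Eaa = expect (leaf_chain n) (\<lambda>Ps. ?S Ps a * ?S Ps a)"
    have "real a * (real a - 1) * Eab = real b * (real b - 1) * Eaa"
      unfolding Eab_def Eaa_def using leaf_mean_nsing_mixed[of b a] a b ba by simp
    then have Eab: "Eab = real b * (real b - 1) * Eaa / (real a * (real a - 1))"
      using nz by (simp add: eq_divide_eq mult.commute)
    have "expect (leaf_chain n) (\<lambda>Ps. ext_coeff n Ps a * ext_coeff n Ps b)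
        = Eab / (real (a choose 2) * real (b choose 2))"
      by (simp add: ext_coeff_def Eab_def)
    also have "\<dots> = 4 * Eaa / (real a * (real a - 1))\<^sup>2"
    proof -
      have cancel: "B * E / A / (A / 2 * (B / 2)) = 4 * E / A\<^sup>2" if "A \<noteq> 0" "B \<noteq> 0" for A B E :: real
        using that by (simp add: field_simps power2_eq_square)
      show ?thesis unfolding Eab real_choose_two by (rule cancel) (use nz in auto)
    qed
    also have "\<dots> = coeff_moment n a"
      using leaf_mean_nsing_sq[of a] a nz unfolding Eaa_def
      by (simp add: coeff_moment_def divide_simps power2_eq_square) (simp add: algebra_simps)
    finally show ?thesis .
  qed
  show ?thesis
  proof (cases "b \<le> a")
    case True
    then show ?thesis using ordered[OF a b] by (simp add: max_def)
  next
    case False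
    then show ?thesis using ordered[OF b a] by (simp add: max_def mult.commute)
  qed
qed

end

section \<open>The exponential weights\<close>

lemma prob_space_Exp1: "prob_space Exp1"
  unfolding Exp1_def by (rule prob_space_exponential_density) simp

lemma Exp1_moment: "has_bochner_integral Exp1 (\<lambda>x. x ^ i) (fact i)"
proof -
  interpret prob_space Exp1 by (rule prob_space_Exp1)
  have "distributed Exp1 lborel (\<lambda>x. x) (exponential_density 1)"
    unfolding distributed_def Exp1_def by (auto simp: distr_id2)
  then show ?thesis using has_bochner_integral_erlang_ith_moment[of 1 "\<lambda>x. x" 0 i] by simp
qed

lemma Exp1_nonneg: "AE x in Exp1. 0 \<le> x"
  unfolding Exp1_def by (subst AE_density) (auto simp: exponential_density_def)

abbreviation weights :: "nat set \<Rightarrow> (nat \<Rightarrow> real) measure" where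
  "weights I \<equiv> PiM I (\<lambda>_. Exp1)"

lemma prob_space_weights: "prob_space (weights I)"
  by (intro prob_space_PiM prob_space_Exp1)

lemma weights_moment:
  assumes I: "finite I"
  shows "has_bochner_integral (weights I) (\<lambda>W. \<Prod>i\<in>I. W i ^ e i) (\<Prod>i\<in>I. fact (e i))"
proof -
  interpret product_sigma_finite "\<lambda>_. Exp1"
    unfolding product_sigma_finite_def using prob_space_Exp1 prob_space_imp_sigma_finite by blast
  have int: "integrable Exp1 (\<lambda>x. x ^ e i)" and val: "integral\<^sup>L Exp1 (\<lambda>x. x ^ e i) = fact (e i)" for i
    using Exp1_moment[of "e i"] by (auto simp: has_bochner_integral_iff)
  show ?thesis
    using product_integrable_prod[OF I int] product_integral_prod[OF I int]
    by (simp add: has_bochner_integral_iff val)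
qed

lemma prod_power_indicator:
  fixes x :: "nat \<Rightarrow> real"
  assumes "finite I" "j \<in> I"
  shows "(\<Prod>i\<in>I. x i ^ (if i = j then 1 else 0)) = x j"
proof -
  have "(\<Prod>i\<in>I. x i ^ (if i = j then 1 else 0)) = (\<Prod>i\<in>I. if i = j then x i else 1)"
    by (intro prod.cong) auto
  then show ?thesis using assms by simp
qed

lemma weights_mean:
  assumes I: "finite I" and j: "j \<in> I"
  shows "has_bochner_integral (weights I) (\<lambda>W. W j) 1"
proof -
  have "(\<Prod>i\<in>I. W i ^ (if i = j then 1 else 0)) = W j" for W :: "nat \<Rightarrow> real"
    using I j by (rule prod_power_indicator)
  moreover have "(\<Prod>i\<in>I. fact (if i = j then 1 else 0) :: real) = 1"
    by (intro prod.neutral) simp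
  ultimately show ?thesis using weights_moment[OF I, of "\<lambda>i. if i = j then 1 else 0"] by simp
qed

lemma weights_product_mean:
  assumes I: "finite I" and jl: "j \<in> I" "l \<in> I"
  shows "has_bochner_integral (weights I) (\<lambda>W. W j * W l) (if j = l then 2 else 1)"
proof -
  let ?e = "\<lambda>i. (if i = j then 1 else 0) + (if i = l then 1 else 0) :: nat"
  have "(\<Prod>i\<in>I. W i ^ ?e i) = W j * W l" for W :: "nat \<Rightarrow> real"
    using prod_power_indicator[OF I jl(1), of W] prod_power_indicator[OF I jl(2), of W]
    by (simp only: power_add prod.distrib)
  moreover have "(\<Prod>i\<in>I. fact (?e i) :: real) = (if j = l then 2 else 1)"
  proof (cases "j = l")
    case True
    have "(\<Prod>i\<in>I. fact (?e i) :: real) = (\<Prod>i\<in>I. if i = j then 2 else 1)"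
      using True by (intro prod.cong) auto
    then show ?thesis using I jl True by (simp add: prod.delta)
  next
    case False
    then have "(\<Prod>i\<in>I. fact (?e i) :: real) = 1" by (intro prod.neutral) auto
    with False show ?thesis by simp
  qed
  ultimately show ?thesis using weights_moment[OF I, of ?e] by simp
qed

lemma integral_product_pmf:
  fixes f :: "'a \<Rightarrow> real" and h :: "'b \<Rightarrow> real"
  assumes M: "prob_space M" and fin: "finite (set_pmf p)" and f: "integrable M f"
  shows "integrable (M \<Otimes>\<^sub>M measure_pmf p) (\<lambda>\<omega>. f (fst \<omega>) * h (snd \<omega>))"
    and "integral\<^sup>L (M \<Otimes>\<^sub>M measure_pmf p) (\<lambda>\<omega>. f (fst \<omega>) * h (snd \<omega>)) = integral\<^sup>L M f * expect p h"
proof -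
  interpret M: prob_space M by (rule M)
  interpret pair_sigma_finite M "measure_pmf p"
    by (intro pair_sigma_finite.intro M.sigma_finite_measure_axioms)
       (rule measure_pmf.sigma_finite_measure_axioms)
  have [measurable]: "f \<in> borel_measurable M" using f by auto
  have [measurable]: "h \<in> borel_measurable (measure_pmf p)" by simp
  show int: "integrable (M \<Otimes>\<^sub>M measure_pmf p) (\<lambda>\<omega>. f (fst \<omega>) * h (snd \<omega>))"
  proof (rule Fubini_integrable)
    have "integrable M (\<lambda>x. norm (f x) * (\<integral>y. norm (h y) \<partial>measure_pmf p))"
      using f by (intro integrable_mult_left) auto
    then show "integrable M (\<lambda>x. \<integral>y. norm (f (fst (x, y)) * h (snd (x, y))) \<partial>measure_pmf p)"
      by (simp add: abs_mult)
    show "AE x in M. integrable (measure_pmf p) (\<lambda>y. f (fst (x, y)) * h (snd (x, y)))"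
      using fin by (simp add: integrable_measure_pmf_finite)
  qed measurable
  have "integral\<^sup>L (M \<Otimes>\<^sub>M measure_pmf p) (\<lambda>(x,y). f x * h y) = (\<integral>x. (\<integral>y. f x * h y \<partial>measure_pmf p) \<partial>M)"
    using integral_fst[of "\<lambda>x y. f x * h y"] int by (simp add: split_beta')
  then show "integral\<^sup>L (M \<Otimes>\<^sub>M measure_pmf p) (\<lambda>\<omega>. f (fst \<omega>) * h (snd \<omega>)) = integral\<^sup>L M f * expect p h"
    by (simp add: split_beta')
qed

lemma weight_measurable[measurable]: "(\<lambda>W. W j) \<in> borel_measurable (weights I)"
proof (cases "j \<in> I")
  case True
  have "(\<lambda>x. x) \<in> measurable Exp1 borel" by (rule measurable_ident_sets) (simp add: Exp1_def)
  with measurable_component_singleton[OF True, of "\<lambda>_. Exp1"] show ?thesis by (rule measurable_compose)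
next
  case False
  have "(\<lambda>W. undefined :: real) \<in> borel_measurable (weights I)" by simp
  then show ?thesis
    by (rule measurable_cong[THEN iffD1, rotated]) (use False in \<open>auto simp: space_PiM PiE_def extensional_def\<close>)
qed

lemma weight_fst_measurable[measurable]: "(\<lambda>\<omega>. fst \<omega> j) \<in> borel_measurable (weights I \<Otimes>\<^sub>M M)"
  by (rule measurable_compose[OF measurable_fst weight_measurable])

lemma pmf_snd_measurable[measurable]: "(\<lambda>\<omega>. h (snd \<omega>) :: real) \<in> borel_measurable (M \<Otimes>\<^sub>M measure_pmf p)"
  by (rule measurable_compose[OF measurable_snd]) simp

text \<open>Coalescent times evaluated at a random level are measurable, since the level ranges
  over the finitely many values 0..n up to a constant tail.\<close>
lemma coal_T_measurable[measurable]:
  "(\<lambda>\<omega>. coal_T n (fst \<omega>) (g (snd \<omega>))) \<in> borel_measurable (weights I \<Otimes>\<^sub>M measure_pmf p)"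
proof -
  have eq: "coal_T n W k' = (\<Sum>k\<le>n. if k' = k then coal_T n W k else 0)" for W k'
    by (cases "k' \<le> n") (auto simp: coal_T_def)
  have "(\<lambda>\<omega>. \<Sum>k\<le>n. if g (snd \<omega>) = k then coal_T n (fst \<omega>) k else 0) \<in> borel_measurable (weights I \<Otimes>\<^sub>M measure_pmf p)"
    unfolding coal_T_def by measurable
  then show ?thesis by (subst eq)
qed

lemma AE_weights_nonneg:
  assumes I: "finite I"
  shows "AE \<omega> in weights I \<Otimes>\<^sub>M measure_pmf p. (\<forall>j\<in>I. 0 \<le> fst \<omega> j) \<and> snd \<omega> \<in> set_pmf p"
proof -
  interpret M: prob_space "weights I" by (rule prob_space_weights)
  interpret pair_sigma_finite "weights I" "measure_pmf p"
    by (intro pair_sigma_finite.intro M.sigma_finite_measure_axioms)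
       (rule measure_pmf.sigma_finite_measure_axioms)
  have "AE x in weights I. \<forall>j\<in>I. 0 \<le> x j"
    using I by (intro AE_finite_allI AE_PiM_component[OF prob_space_Exp1] Exp1_nonneg) auto
  then have "AE x in weights I. AE y in measure_pmf p. (\<forall>j\<in>I. 0 \<le> fst (x,y) j) \<and> snd (x,y) \<in> set_pmf p"
    by eventually_elim (use AE_measure_pmf[of p] in auto)
  moreover have [measurable]: "Measurable.pred (measure_pmf p) (\<lambda>y. y \<in> set_pmf p)" by simp
  ultimately show ?thesis
    by (intro AE_pair_measure) (use I in measurable)
qed

section \<open>The external length as a weighted sum of singleton counts\<close>

lemma coalescent_eq: "coalescent n = weights {2..n} \<Otimes>\<^sub>M measure_pmf (leaf_chain n)"
  by (simp add: coalescent_def leaf_chain_def)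

lemma coal_T_antimono:
  assumes W: "\<forall>j\<in>{2..n}. 0 \<le> W j" and kk: "k \<le> k'"
  shows "coal_T n W k' \<le> coal_T n W k"
  unfolding coal_T_def
proof (rule sum_mono2)
  fix j assume j: "j \<in> {k + 1..n} - {k' + 1..n}"
  show "0 \<le> W j / real (j choose 2)"
  proof (cases "j \<ge> 2")
    case False
    then have "j choose 2 = 0" by (intro binomial_eq_0) simp
    then show ?thesis by (simp only:) simp
  qed (use W j in auto)
qed (use kk in auto)

lemma coal_T_at_n: "coal_T n W n = 0"
  by (simp add: coal_T_def)

lemma coal_T_nonneg: "\<forall>j\<in>{2..n}. 0 \<le> W j \<Longrightarrow> 0 \<le> coal_T n W k"
  using coal_T_antimono[of n W k "max k n"] by (simp add: coal_T_def)

lemma min_coal_T: "\<forall>j\<in>{2..n}. 0 \<le> W j \<Longrightarrow> min (coal_T n W a) (coal_T n W b) = coal_T n W (max a b)"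
  using coal_T_antimono[of n W a b] coal_T_antimono[of n W b a] by (cases "a \<le> b") (auto simp: max_def min_def)

lemma leaf_chain_singleton_mono:
  assumes n: "n \<ge> 1" and Ps: "Ps \<in> set_pmf (leaf_chain n)"
  shows "{i} \<in> Ps ! (q + d) \<Longrightarrow> q + d \<le> n - 1 \<Longrightarrow> {i} \<in> Ps ! q"
proof (induction d)
  case (Suc d)
  then show ?case using leaf_chain_support(2)[OF n Ps, of "q + d" i] by simp
qed simp

lemma coal_rho_props:
  assumes n: "n \<ge> 3" and Ps: "Ps \<in> set_pmf (leaf_chain n)" and i: "i \<in> {1..n}"
  shows "1 \<le> coal_rho n Ps i"
    and "\<And>j. 2 \<le> j \<Longrightarrow> j \<le> n \<Longrightarrow> coal_rho n Ps i < j \<longleftrightarrow> {i} \<in> Ps ! (n - j)"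
proof -
  have n1: "n \<ge> 1" using n by simp
  define K where "K = {k \<in> {1..n}. {i} \<notin> coal_pi n Ps k}"
  have rho: "coal_rho n Ps i = Max K" by (simp add: coal_rho_def K_def)
  have fin: "finite K" by (simp add: K_def)
  have "1 \<in> K"
  proof -
    have root: "is_partition {1..n} (Ps ! (n - 1))" "card (Ps ! (n - 1)) = 1"
      using leaf_chain_support(1)[OF n1 Ps, of "n - 1"] n by auto
    then obtain B where B: "Ps ! (n - 1) = {B}" by (auto simp: card_Suc_eq)
    with root(1) have "B = {1..n}" by (simp add: is_partition_def)
    moreover have "card {i} \<noteq> card {1..n}" using n by simp
    then have "{i} \<noteq> {1..n}" by metis
    ultimately show ?thesis using B n by (auto simp: K_def coal_pi_def)
  qed
  then show "1 \<le> coal_rho n Ps i" unfolding rho using Max_ge[OF fin] by blast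
  fix j assume j: "2 \<le> j" "j \<le> n"
  show "coal_rho n Ps i < j \<longleftrightarrow> {i} \<in> Ps ! (n - j)"
  proof
    assume "coal_rho n Ps i < j"
    then have "j \<notin> K" using Max_ge[OF fin] rho by force
    then show "{i} \<in> Ps ! (n - j)" using j by (auto simp: K_def coal_pi_def)
  next
    assume external: "{i} \<in> Ps ! (n - j)"
    have "k < j" if "k \<in> K" for k
    proof (rule ccontr)
      assume "\<not> k < j"
      then have "(n - k) + (k - j) = n - j" "(n - k) + (k - j) \<le> n - 1" using that j by (auto simp: K_def)
      then have "{i} \<in> Ps ! (n - k)"
        using leaf_chain_singleton_mono[OF n1 Ps, of i "n - k" "k - j"] external by simp
      with that show False by (auto simp: K_def coal_pi_def)
    qed
    then show "coal_rho n Ps i < j" unfolding rho using fin \<open>1 \<in> K\<close> by (subst Max_less_iff) auto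
  qed
qed

text \<open>The sum over leaves of the external branch lengths above level m, written as a sum
  over levels: sum_{j=m+1}^n W_j S_j / binom(j,2).\<close>
definition ext_sum :: "nat \<Rightarrow> nat \<Rightarrow> (nat \<Rightarrow> real) \<times> nat set set list \<Rightarrow> real" where
  "ext_sum n m \<omega> = (\<Sum>j\<in>{m+1..n}. fst \<omega> j * ext_coeff n (snd \<omega>) j)"

lemma ext_sum_measurable[measurable]: "ext_sum n m \<in> borel_measurable (weights I \<Otimes>\<^sub>M measure_pmf p)"
  unfolding ext_sum_def by measurable

lemma ext_length_part_measurable[measurable]:
  "ext_length_part n \<alpha> \<beta> \<in> borel_measurable (weights I \<Otimes>\<^sub>M measure_pmf p)"
  unfolding ext_length_part_def Let_def by measurable

lemma ext_length_measurable[measurable]: "ext_length n \<in> borel_measurable (weights I \<Otimes>\<^sub>M measure_pmf p)"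
  unfolding ext_length_def by measurable

lemma sum_over_leaves_eq_ext_sum:
  assumes n: "n \<ge> 3" and Ps: "Ps \<in> set_pmf (leaf_chain n)" and m: "1 \<le> m" "m \<le> n"
  shows "(\<Sum>i\<in>{1..n}. coal_T n W (max (coal_rho n Ps i) m)) = ext_sum n m (W, Ps)"
proof -
  let ?w = "\<lambda>j. W j / real (j choose 2)"
  have "(\<Sum>i\<in>{1..n}. coal_T n W (max (coal_rho n Ps i) m))
      = (\<Sum>i\<in>{1..n}. \<Sum>j\<in>{m+1..n}. if coal_rho n Ps i < j then ?w j else 0)"
  proof (intro sum.cong refl)
    fix i
    have "{j \<in> {m+1..n}. coal_rho n Ps i < j} = {max (coal_rho n Ps i) m + 1..n}" by auto
    then show "coal_T n W (max (coal_rho n Ps i) m) = (\<Sum>j\<in>{m+1..n}. if coal_rho n Ps i < j then ?w j else 0)"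
      unfolding coal_T_def by (simp only: sum.inter_filter[symmetric, OF finite_atLeastAtMost])
  qed
  also have "\<dots> = (\<Sum>j\<in>{m+1..n}. \<Sum>i\<in>{1..n}. if coal_rho n Ps i < j then ?w j else 0)"
    by (rule sum.swap)
  also have "\<dots> = (\<Sum>j\<in>{m+1..n}. ?w j * real (card {i\<in>{1..n}. coal_rho n Ps i < j}))"
    by (intro sum.cong refl) (simp add: sum.If_cases Int_def)
  also have "\<dots> = (\<Sum>j\<in>{m+1..n}. W j * ext_coeff n Ps j)"
  proof (intro sum.cong refl)
    fix j assume j: "j \<in> {m+1..n}"
    have "is_partition {1..n} (Ps ! (n - j))" using leaf_chain_support(1)[OF _ Ps, of "n - j"] j m by auto
    then have "{i} \<in> Ps ! (n - j) \<Longrightarrow> i \<in> {1..n}" for i by (auto simp: is_partition_def)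
    then have "{i\<in>{1..n}. coal_rho n Ps i < j} = {i. {i} \<in> Ps ! (n - j)}"
      using coal_rho_props(2)[OF n Ps] j m by auto
    then show "?w j * real (card {i\<in>{1..n}. coal_rho n Ps i < j}) = W j * ext_coeff n Ps j"
      by (simp add: ext_coeff_def nsing_def)
  qed
  finally show ?thesis by (simp add: ext_sum_def)
qed

lemma floor_powr_bounds:
  assumes n: "n \<ge> 1" and \<alpha>: "0 \<le> \<alpha>" "\<alpha> \<le> 1"
  shows "1 \<le> nat \<lfloor>real n powr \<alpha>\<rfloor>" "nat \<lfloor>real n powr \<alpha>\<rfloor> \<le> n"
proof -
  have "1 \<le> real n powr \<alpha>" using n \<alpha> by (intro ge_one_powr_ge_zero) auto
  then show "1 \<le> nat \<lfloor>real n powr \<alpha>\<rfloor>" by linarith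
  have "real n powr \<alpha> \<le> real n powr 1" using n \<alpha> by (intro powr_mono) auto
  then show "nat \<lfloor>real n powr \<alpha>\<rfloor> \<le> n" using n by simp linarith
qed

lemma ext_length_eq_ext_sum:
  assumes n: "n \<ge> 3" and \<alpha>: "0 \<le> \<alpha>" "\<alpha> \<le> 1"
  shows "AE \<omega> in coalescent n. ext_length_part n \<alpha> 1 \<omega> = ext_sum n (nat \<lfloor>real n powr \<alpha>\<rfloor>) \<omega>"
    and "AE \<omega> in coalescent n. ext_length n \<omega> = ext_sum n 1 \<omega>"
proof -
  let ?m = "nat \<lfloor>real n powr \<alpha>\<rfloor>"
  have ae: "AE \<omega> in coalescent n. (\<forall>j\<in>{2..n}. 0 \<le> fst \<omega> j) \<and> snd \<omega> \<in> set_pmf (leaf_chain n)"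
    unfolding coalescent_eq by (rule AE_weights_nonneg) simp
  have part: "ext_length_part n \<alpha> 1 (W, Ps) = ext_sum n ?m (W, Ps)"
    if W: "\<forall>j\<in>{2..n}. 0 \<le> W j" and Ps: "Ps \<in> set_pmf (leaf_chain n)" for W Ps
  proof -
    have top: "nat \<lfloor>real n powr 1\<rfloor> = n" using n by simp
    have "min (coal_T n W k) (coal_T n W ?m) - min (coal_T n W k) (coal_T n W n) = coal_T n W (max k ?m)" for k
      using coal_T_nonneg[OF W, of k] by (simp add: min_coal_T[OF W] coal_T_at_n min_absorb2)
    then have "ext_length_part n \<alpha> 1 (W, Ps) = (\<Sum>i\<in>{1..n}. coal_T n W (max (coal_rho n Ps i) ?m))"
      unfolding ext_length_part_def Let_def fst_conv snd_conv top by simp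
    also have "\<dots> = ext_sum n ?m (W, Ps)"
      by (rule sum_over_leaves_eq_ext_sum[OF n Ps]) (use floor_powr_bounds[OF _ \<alpha>, of n] n in auto)
    finally show ?thesis .
  qed
  from ae show "AE \<omega> in coalescent n. ext_length_part n \<alpha> 1 \<omega> = ext_sum n ?m \<omega>"
    by eventually_elim (use part in \<open>auto simp: split_beta'\<close>)
  have full: "ext_length n (W, Ps) = ext_sum n 1 (W, Ps)" if Ps: "Ps \<in> set_pmf (leaf_chain n)" for W Ps
  proof -
    have "ext_length n (W, Ps) = (\<Sum>i\<in>{1..n}. coal_T n W (max (coal_rho n Ps i) 1))"
      unfolding ext_length_def fst_conv snd_conv
      using coal_rho_props(1)[OF n Ps] by (intro sum.cong refl) (simp add: max_absorb1)
    also have "\<dots> = ext_sum n 1 (W, Ps)"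
      by (rule sum_over_leaves_eq_ext_sum[OF n Ps]) (use n in auto)
    finally show ?thesis .
  qed
  from ae show "AE \<omega> in coalescent n. ext_length n \<omega> = ext_sum n 1 \<omega>"
    by eventually_elim (use full in \<open>auto simp: split_beta'\<close>)
qed

section \<open>Summation identities\<close>

lemma sum_square_max:
  fixes e :: "nat \<Rightarrow> real"
  shows "m \<le> N \<Longrightarrow> (\<Sum>a\<in>{m+1..N}. \<Sum>b\<in>{m+1..N}. (if a = b then 2 else 1) * e (max a b))
       = (\<Sum>a\<in>{m+1..N}. 2 * (real a - real m) * e a)"
proof (induction rule: dec_induct)
  case (step N)
  let ?A = "{m+1..N}" and ?x = "Suc N"
  let ?F = "\<lambda>a b. (if a = b then 2 else 1) * e (max a b)"
  have ins: "{m+1..Suc N} = insert ?x ?A" using step(1) by auto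
  have new_row: "(\<Sum>b\<in>?A. ?F ?x b) = real (N - m) * e ?x" and new_col: "(\<Sum>a\<in>?A. ?F a ?x) = real (N - m) * e ?x"
    by (simp_all add: max_def)
  have "(\<Sum>a\<in>insert ?x ?A. \<Sum>b\<in>insert ?x ?A. ?F a b)
      = ?F ?x ?x + (\<Sum>b\<in>?A. ?F ?x b) + (\<Sum>a\<in>?A. ?F a ?x) + (\<Sum>a\<in>?A. \<Sum>b\<in>?A. ?F a b)"
    by (simp add: sum.distrib algebra_simps)
  also have "\<dots> = 2 * e ?x + 2 * real (N - m) * e ?x + (\<Sum>a\<in>?A. 2 * (real a - real m) * e a)"
    by (simp only: new_row new_col step(3)) simp
  also have "\<dots> = (\<Sum>a\<in>insert ?x ?A. 2 * (real a - real m) * e a)"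
    using step(1) by (simp add: of_nat_diff algebra_simps)
  finally show ?case unfolding ins .
qed simp

lemma sum_harmonic_quadratic:
  "m \<le> N \<Longrightarrow> (\<Sum>a\<in>{m+1..N}. (real a - real m) * (real a - 2) / real a)
    = (real N * (real N + 1) - real m * (real m + 1)) / 2 - (real m + 2) * (real N - real m)
      + 2 * real m * (harm N - harm m)"
proof (induction rule: dec_induct)
  case (step N)
  have step_identity: "(x + 1 - y) * (x + 1 - 2) / (x + 1)
        + ((x * (x + 1) - y * (y + 1)) / 2 - (y + 2) * (x - y) + 2 * y * (h - H))
      = ((x + 1) * (x + 1 + 1) - y * (y + 1)) / 2 - (y + 2) * (x + 1 - y) + 2 * y * (h + 1 / (x + 1) - H)"
    if "x \<ge> 0" for x y h H :: real
    using that by (simp add: field_simps)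
  have "{m+1..Suc N} = insert (Suc N) {m+1..N}" using step(1) by auto
  then show ?case
    using step(3) step_identity[of "real N" "real m" "harm N" "harm m"]
    by (simp add: harm_Suc inverse_eq_divide add_ac)
qed simp

lemma sum_harmonic_reciprocal:
  "m \<le> N \<Longrightarrow> 1 \<le> m \<Longrightarrow> (\<Sum>a\<in>{m+1..N}. (real a - real m) / (real a * (real a - 1)))
    = harm (N - 1) - harm (m - 1) - 1 + real m / real N"
proof (induction rule: dec_induct)
  case (step N)
  have N: "real N \<noteq> 0" using step by auto
  have step_identity: "(x + 1 - y) / ((x + 1) * (x + 1 - 1)) + (h - H - 1 + y / x)
      = (h + 1 / x) - H - 1 + y / (x + 1)"
    if "x \<noteq> 0" "x \<ge> 0" for x y h H :: real
  proof -
    have "x + 1 \<noteq> 0" using that by simp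
    with that show ?thesis by (simp add: divide_simps) (simp add: algebra_simps)
  qed
  have harm_N: "harm (Suc N - 1) = harm (N - 1) + 1 / real N"
    using N by (cases N) (simp_all add: harm_Suc inverse_eq_divide)
  have "{m+1..Suc N} = insert (Suc N) {m+1..N}" using step(1) by auto
  then show ?case
    using step(3,4) step_identity[OF N, of "real m" "harm (N - 1)" "harm (m - 1)"] harm_N
    by (simp add: add_ac)
qed simp

section \<open>Moments of the weighted sum and the main theorem\<close>

context
  fixes n :: nat
  assumes n3: "n \<ge> 3"
begin

lemma prob_space_coalescent: "prob_space (coalescent n)"
  unfolding coalescent_eq by (intro prob_space_pair prob_space_weights) (rule prob_space_measure_pmf)

private lemma leaf_chain_finite_n: "finite (set_pmf (leaf_chain n))"
  using leaf_chain_finite n3 by simp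

text \<open>By independence of weights and chain, each term W_j c_j of ext_sum has mean
  E W_j E c_j, and each product of two terms has mean E(W_j W_l) E(c_j c_l).\<close>
lemma ext_term_moment:
  assumes j: "j \<in> {2..n}"
  shows "integrable (coalescent n) (\<lambda>\<omega>. fst \<omega> j * ext_coeff n (snd \<omega>) j)"
    and "integral\<^sup>L (coalescent n) (\<lambda>\<omega>. fst \<omega> j * ext_coeff n (snd \<omega>) j) = 2 / (real n - 1)"
proof -
  note W = weights_mean[OF finite_atLeastAtMost j, unfolded has_bochner_integral_iff]
  note prod = integral_product_pmf[OF prob_space_weights leaf_chain_finite_n conjunct1[OF W],
      of "\<lambda>Ps. ext_coeff n Ps j"]
  show "integrable (coalescent n) (\<lambda>\<omega>. fst \<omega> j * ext_coeff n (snd \<omega>) j)"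
    unfolding coalescent_eq using prod(1) .
  show "integral\<^sup>L (coalescent n) (\<lambda>\<omega>. fst \<omega> j * ext_coeff n (snd \<omega>) j) = 2 / (real n - 1)"
    unfolding coalescent_eq using prod(2) W mean_ext_coeff[OF n3 j] by simp
qed

lemma ext_term_product_moment:
  assumes j: "j \<in> {2..n}" and l: "l \<in> {2..n}"
  shows "integrable (coalescent n) (\<lambda>\<omega>. (fst \<omega> j * fst \<omega> l) * (ext_coeff n (snd \<omega>) j * ext_coeff n (snd \<omega>) l))"
    and "integral\<^sup>L (coalescent n) (\<lambda>\<omega>. (fst \<omega> j * fst \<omega> l) * (ext_coeff n (snd \<omega>) j * ext_coeff n (snd \<omega>) l))
      = (if j = l then 2 else 1) * coeff_moment n (max j l)"
proof -
  note W = weights_product_mean[OF finite_atLeastAtMost j l, unfolded has_bochner_integral_iff]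
  note prod = integral_product_pmf[OF prob_space_weights leaf_chain_finite_n conjunct1[OF W],
      of "\<lambda>Ps. ext_coeff n Ps j * ext_coeff n Ps l"]
  show "integrable (coalescent n) (\<lambda>\<omega>. (fst \<omega> j * fst \<omega> l) * (ext_coeff n (snd \<omega>) j * ext_coeff n (snd \<omega>) l))"
    unfolding coalescent_eq using prod(1) .
  show "integral\<^sup>L (coalescent n) (\<lambda>\<omega>. (fst \<omega> j * fst \<omega> l) * (ext_coeff n (snd \<omega>) j * ext_coeff n (snd \<omega>) l))
      = (if j = l then 2 else 1) * coeff_moment n (max j l)"
    unfolding coalescent_eq using prod(2) W mean_ext_coeff_product[OF n3 j l] by simp
qed

lemma ext_sum_mean:
  assumes m: "1 \<le> m" "m \<le> n"
  shows "integrable (coalescent n) (ext_sum n m)"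
    and "integral\<^sup>L (coalescent n) (ext_sum n m) = 2 * (real n - real m) / (real n - 1)"
proof -
  have Y: "ext_sum n m = (\<lambda>\<omega>. \<Sum>j\<in>{m+1..n}. fst \<omega> j * ext_coeff n (snd \<omega>) j)"
    by (simp add: ext_sum_def fun_eq_iff)
  have levels: "j \<in> {m+1..n} \<Longrightarrow> j \<in> {2..n}" for j using m by auto
  show "integrable (coalescent n) (ext_sum n m)"
    unfolding Y by (intro Bochner_Integration.integrable_sum ext_term_moment(1) levels)
  have "integral\<^sup>L (coalescent n) (ext_sum n m) = (\<Sum>j\<in>{m+1..n}. 2 / (real n - 1))"
    unfolding Y using levels
    by (simp add: Bochner_Integration.integral_sum ext_term_moment)
  then show "integral\<^sup>L (coalescent n) (ext_sum n m) = 2 * (real n - real m) / (real n - 1)"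
    using m by (simp add: of_nat_diff)
qed

lemma ext_sum_second_moment:
  assumes m: "1 \<le> m" "m \<le> n"
  shows "integrable (coalescent n) (\<lambda>\<omega>. (ext_sum n m \<omega>)\<^sup>2)"
    and "integral\<^sup>L (coalescent n) (\<lambda>\<omega>. (ext_sum n m \<omega>)\<^sup>2)
      = (\<Sum>a\<in>{m+1..n}. 2 * (real a - real m) * coeff_moment n a)"
proof -
  let ?t = "\<lambda>j l \<omega>. (fst \<omega> j * fst \<omega> l) * (ext_coeff n (snd \<omega>) j * ext_coeff n (snd \<omega>) l)"
  have Y: "(\<lambda>\<omega>. (ext_sum n m \<omega>)\<^sup>2) = (\<lambda>\<omega>. \<Sum>j\<in>{m+1..n}. \<Sum>l\<in>{m+1..n}. ?t j l \<omega>)"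
    by (simp add: ext_sum_def fun_eq_iff power2_eq_square sum_product algebra_simps)
  have levels: "j \<in> {m+1..n} \<Longrightarrow> j \<in> {2..n}" for j using m by auto
  have int: "integrable (coalescent n) (?t j l)" if "j \<in> {m+1..n}" "l \<in> {m+1..n}" for j l
    using that by (intro ext_term_product_moment(1) levels)
  show "integrable (coalescent n) (\<lambda>\<omega>. (ext_sum n m \<omega>)\<^sup>2)"
    unfolding Y by (intro Bochner_Integration.integrable_sum int)
  have "integral\<^sup>L (coalescent n) (\<lambda>\<omega>. (ext_sum n m \<omega>)\<^sup>2)
      = (\<Sum>j\<in>{m+1..n}. integral\<^sup>L (coalescent n) (\<lambda>\<omega>. \<Sum>l\<in>{m+1..n}. ?t j l \<omega>))"
    unfolding Y by (intro Bochner_Integration.integral_sum Bochner_Integration.integrable_sum int)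
  also have "\<dots> = (\<Sum>j\<in>{m+1..n}. \<Sum>l\<in>{m+1..n}. integral\<^sup>L (coalescent n) (?t j l))"
    by (intro sum.cong refl Bochner_Integration.integral_sum int)
  also have "\<dots> = (\<Sum>j\<in>{m+1..n}. \<Sum>l\<in>{m+1..n}. (if j = l then 2 else 1) * coeff_moment n (max j l))"
    by (intro sum.cong refl ext_term_product_moment(2) levels)
  also have "\<dots> = (\<Sum>a\<in>{m+1..n}. 2 * (real a - real m) * coeff_moment n a)"
    using m by (intro sum_square_max) simp
  finally show "integral\<^sup>L (coalescent n) (\<lambda>\<omega>. (ext_sum n m \<omega>)\<^sup>2)
      = (\<Sum>a\<in>{m+1..n}. 2 * (real a - real m) * coeff_moment n a)" .
qed

lemma ext_sum_variance:
  assumes m: "1 \<le> m" "m \<le> n"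
  shows "integral\<^sup>L (coalescent n) (\<lambda>\<omega>. (ext_sum n m \<omega> - 2 * (real n - real m) / (real n - 1))\<^sup>2)
    = 8 * (harm (n - 1) - harm (m - 1)) * (real n + 2 * real m - 2) / ((real n - 1) * (real n - 2))
      - 4 * (real n - real m) * (4 * real n + real m - 5) / ((real n - 1)\<^sup>2 * (real n - 2))"
proof -
  interpret prob_space "coalescent n" by (rule prob_space_coalescent)
  let ?\<mu> = "2 * (real n - real m) / (real n - 1)"
  have closed_form: "8 / ((x-1)*(x-2)) * ((x*(x+1) - y*(y+1))/2 - (y+2)*(x-y) + 2*y*((H1 + 1/x) - (H0 + 1/y)))
      + 8/(x-1) * (H1 - H0 - 1 + y/x) - (2*(x-y)/(x-1))\<^sup>2
    = 8*(H1-H0)*(x+2*y-2)/((x-1)*(x-2)) - 4*(x-y)*(4*x+y-5)/((x-1)\<^sup>2*(x-2))"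
    if "x \<ge> 3" "y \<ge> 1" for x y H0 H1 :: real
  proof -
    have "x \<noteq> 0" "x - 1 \<noteq> 0" "x - 2 \<noteq> 0" "y \<noteq> 0" using that by auto
    then show ?thesis by (simp add: divide_simps power2_eq_square) (simp add: algebra_simps)
  qed
  have "integral\<^sup>L (coalescent n) (\<lambda>\<omega>. (ext_sum n m \<omega> - ?\<mu>)\<^sup>2)
      = integral\<^sup>L (coalescent n) (\<lambda>\<omega>. (ext_sum n m \<omega>)\<^sup>2 - 2 * ?\<mu> * ext_sum n m \<omega> + ?\<mu>\<^sup>2)"
    by (simp add: power2_eq_square algebra_simps)
  also have "\<dots> = (\<Sum>a\<in>{m+1..n}. 2 * (real a - real m) * coeff_moment n a) - ?\<mu>\<^sup>2"
    using ext_sum_mean[OF m] ext_sum_second_moment[OF m] by (simp add: prob_space power2_eq_square)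
  also have "(\<Sum>a\<in>{m+1..n}. 2 * (real a - real m) * coeff_moment n a)
      = 8 / ((real n - 1) * (real n - 2)) * (\<Sum>a\<in>{m+1..n}. (real a - real m) * (real a - 2) / real a)
       + 8 / (real n - 1) * (\<Sum>a\<in>{m+1..n}. (real a - real m) / (real a * (real a - 1)))"
    by (simp add: coeff_moment_def sum_distrib_left sum.distrib field_simps)
  also have "(\<Sum>a\<in>{m+1..n}. (real a - real m) * (real a - 2) / real a)
      = (real n * (real n + 1) - real m * (real m + 1)) / 2 - (real m + 2) * (real n - real m)
        + 2 * real m * ((harm (n - 1) + 1 / real n) - (harm (m - 1) + 1 / real m))"
  proof -
    have "harm k = harm (k - 1) + 1 / real k" if "k \<ge> 1" for k
      using that by (cases k) (simp_all add: harm_Suc inverse_eq_divide)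
    then show ?thesis using sum_harmonic_quadratic[OF m(2)] m n3 by simp
  qed
  also have "(\<Sum>a\<in>{m+1..n}. (real a - real m) / (real a * (real a - 1)))
      = harm (n - 1) - harm (m - 1) - 1 + real m / real n"
    by (rule sum_harmonic_reciprocal[OF m(2,1)])
  finally show ?thesis using closed_form[of "real n" "real m"] n3 m by simp
qed

lemma ext_sum_full_moments:
  shows "integral\<^sup>L (coalescent n) (ext_sum n 1) = 2"
    and "integral\<^sup>L (coalescent n) (\<lambda>\<omega>. (ext_sum n 1 \<omega> - 2)\<^sup>2)
      = (8 * real n * harm n - 16 * real n + 8) / ((real n - 1) * (real n - 2))"
proof -
  have nz: "real n \<noteq> 0" "real n - 1 \<noteq> 0" "real n - 2 \<noteq> 0" using n3 by auto
  have mean: "2 * (real n - real 1) / (real n - 1) = 2"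
    using nz(2) by (simp only: of_nat_1) (rule nonzero_mult_div_cancel_right)
  then show "integral\<^sup>L (coalescent n) (ext_sum n 1) = 2"
    using ext_sum_mean(2)[of 1] n3 by simp
  have harm_n: "harm n = harm (n - 1) + 1 / real n"
    using n3 by (cases n) (simp_all add: harm_Suc inverse_eq_divide)
  have "8 * (harm (n - 1) - harm (1 - 1)) * (real n + 2 * real 1 - 2) / ((real n - 1) * (real n - 2))
        - 4 * (real n - real 1) * (4 * real n + real 1 - 5) / ((real n - 1)\<^sup>2 * (real n - 2))
      = (8 * real n * harm n - 16 * real n + 8) / ((real n - 1) * (real n - 2))"
    using nz unfolding harm_n by (simp add: harm_expand(1) divide_simps power2_eq_square) (simp add: algebra_simps)
  then show "integral\<^sup>L (coalescent n) (\<lambda>\<omega>. (ext_sum n 1 \<omega> - 2)\<^sup>2)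
      = (8 * real n * harm n - 16 * real n + 8) / ((real n - 1) * (real n - 2))"
    using ext_sum_variance[of 1] n3 unfolding mean by simp
qed

end

lemma integral_centred_square_cong_AE:
  fixes f g :: "'a \<Rightarrow> real"
  assumes "f \<in> borel_measurable M" "g \<in> borel_measurable M" "AE x in M. f x = g x"
  shows "integral\<^sup>L M (\<lambda>x. (f x - c)\<^sup>2) = integral\<^sup>L M (\<lambda>x. (g x - c)\<^sup>2)"
  using assms by (intro integral_cong_AE) (auto elim: eventually_mono)

theorem proposition5:
  fixes n :: nat and \<alpha> :: real
  assumes "n \<ge> 3" and "0 \<le> \<alpha>" and "\<alpha> \<le> 1"
  defines "m \<equiv> nat \<lfloor>real n powr \<alpha>\<rfloor>"
  defines "EL \<equiv> integral\<^sup>L (coalescent n) (ext_length_part n \<alpha> 1)"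
  defines "EL0 \<equiv> integral\<^sup>L (coalescent n) (ext_length n)"
  shows "EL = 2 * (real n - real m) / (real n - 1)
    \<and> integral\<^sup>L (coalescent n) (\<lambda>\<omega>. (ext_length_part n \<alpha> 1 \<omega> - EL)\<^sup>2)
        = 8 * (harm (n - 1) - harm (m - 1)) * (real n + 2 * real m - 2) / ((real n - 1) * (real n - 2))
          - 4 * (real n - real m) * (4 * real n + real m - 5) / ((real n - 1)\<^sup>2 * (real n - 2))
    \<and> EL0 = 2
    \<and> integral\<^sup>L (coalescent n) (\<lambda>\<omega>. (ext_length n \<omega> - EL0)\<^sup>2)
        = (8 * real n * harm n - 16 * real n + 8) / ((real n - 1) * (real n - 2))"
proof -
  note n = assms(1)
  have m: "1 \<le> m" "m \<le> n" using floor_powr_bounds[of n \<alpha>] assms(1-3) by (auto simp: m_def)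
  have meas: "ext_length_part n \<alpha> 1 \<in> borel_measurable (coalescent n)"
    "ext_length n \<in> borel_measurable (coalescent n)" "ext_sum n k \<in> borel_measurable (coalescent n)" for k
    unfolding coalescent_eq by measurable
  have ae_part: "AE \<omega> in coalescent n. ext_length_part n \<alpha> 1 \<omega> = ext_sum n m \<omega>"
    using ext_length_eq_ext_sum(1)[OF assms(1-3)] by (simp add: m_def)
  have ae_full: "AE \<omega> in coalescent n. ext_length n \<omega> = ext_sum n 1 \<omega>"
    using ext_length_eq_ext_sum(2)[OF assms(1-3)] .
  have EL: "EL = 2 * (real n - real m) / (real n - 1)"
    unfolding EL_def using integral_cong_AE[OF meas(1,3) ae_part] ext_sum_mean(2)[OF n m] by simp
  have EL0: "EL0 = 2"
    unfolding EL0_def using integral_cong_AE[OF meas(2,3) ae_full] ext_sum_full_moments(1)[OF n] by simp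
  show ?thesis
    unfolding EL EL0
    using integral_centred_square_cong_AE[OF meas(1,3) ae_part] ext_sum_variance[OF n m]
      integral_centred_square_cong_AE[OF meas(2,3) ae_full] ext_sum_full_moments(2)[OF n]
    by simp
qed

end
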